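(* Let $\beta>0$ be a constant such that for every connected $P_7$-free graph $G'$ on at least two vertices, every potential maximal clique $\Omega'$ of $G'$ and every probability measure $\mu'$ on $\Omega'$, there is a vertex $v\in V(G')$ with $\mu'(N(v)\cap\Omega')\ge\beta$. Then for every $P_7$-free graph $G$, every potential maximal clique $\Omega$ of $G$, and every efficient dominating set $X$ of $G$, we have $|\Omega\cap X|\le 1/\beta$.
   Context: All graphs are finite, simple and undirected. $P_k$ is the path on $k$ vertices; a graph is $P_k$-free if it has no induced subgraph isomorphic to $P_k$. $N(v)$ is the open neighbourhood. A triangulation of $G$ is a set $F$ of non-edges such that $(V(G),E(G)\cup F)$ is chordal; it is minimal if no proper subset is a triangulation. A potential maximal clique of $G$ is a maximal clique of $(V(G),E(G)\cup F)$ for some minimal triangulation $F$. An efficient dominating set of $G$ is a set $X$ with $|N[v]\cap X|=1$ for every vertex $v$, where $N[v]$ is the closed neighbourhood. (A constant $\beta$ with the stated property exists.) *)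

theory Defs
  imports Complex_Main
begin

definition graph :: "'a set \<Rightarrow> ('a \<Rightarrow> 'a \<Rightarrow> bool) \<Rightarrow> bool" where
  "graph V E \<longleftrightarrow> finite V \<and> (\<forall>x y. E x y \<longrightarrow> x \<in> V \<and> y \<in> V)
     \<and> (\<forall>x y. E x y \<longrightarrow> E y x) \<and> (\<forall>x. \<not> E x x)"

definition nbhd :: "('a \<Rightarrow> 'a \<Rightarrow> bool) \<Rightarrow> 'a \<Rightarrow> 'a set" where
  "nbhd E v = {u. E v u}"

definition cnbhd :: "('a \<Rightarrow> 'a \<Rightarrow> bool) \<Rightarrow> 'a \<Rightarrow> 'a set" where
  "cnbhd E v = insert v (nbhd E v)"

definition connected_graph :: "'a set \<Rightarrow> ('a \<Rightarrow> 'a \<Rightarrow> bool) \<Rightarrow> bool" where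
  "connected_graph V E \<longleftrightarrow> V \<noteq> {} \<and> (\<forall>x\<in>V. \<forall>y\<in>V. E\<^sup>*\<^sup>* x y)"

definition has_induced_path :: "'a set \<Rightarrow> ('a \<Rightarrow> 'a \<Rightarrow> bool) \<Rightarrow> nat \<Rightarrow> bool" where
  "has_induced_path V E k \<longleftrightarrow> (\<exists>p :: nat \<Rightarrow> 'a. inj_on p {..<k} \<and> p ` {..<k} \<subseteq> V \<and>
     (\<forall>i<k. \<forall>j<k. E (p i) (p j) \<longleftrightarrow> (i = j + 1 \<or> j = i + 1)))"

definition P7_free :: "'a set \<Rightarrow> ('a \<Rightarrow> 'a \<Rightarrow> bool) \<Rightarrow> bool" where
  "P7_free V E \<longleftrightarrow> \<not> has_induced_path V E 7"

definition has_induced_cycle :: "'a set \<Rightarrow> ('a \<Rightarrow> 'a \<Rightarrow> bool) \<Rightarrow> nat \<Rightarrow> bool" where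
  "has_induced_cycle V E k \<longleftrightarrow> (\<exists>p :: nat \<Rightarrow> 'a. inj_on p {..<k} \<and> p ` {..<k} \<subseteq> V \<and>
     (\<forall>i<k. \<forall>j<k. E (p i) (p j) \<longleftrightarrow> (i = Suc j mod k \<or> j = Suc i mod k)))"

definition chordal :: "'a set \<Rightarrow> ('a \<Rightarrow> 'a \<Rightarrow> bool) \<Rightarrow> bool" where
  "chordal V E \<longleftrightarrow> (\<forall>k\<ge>4. \<not> has_induced_cycle V E k)"

definition non_edges :: "'a set \<Rightarrow> ('a \<Rightarrow> 'a \<Rightarrow> bool) \<Rightarrow> 'a set set" where
  "non_edges V E = {{u, v} | u v. u \<in> V \<and> v \<in> V \<and> u \<noteq> v \<and> \<not> E u v}"

definition add_edges :: "('a \<Rightarrow> 'a \<Rightarrow> bool) \<Rightarrow> 'a set set \<Rightarrow> 'a \<Rightarrow> 'a \<Rightarrow> bool" where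
  "add_edges E F x y \<longleftrightarrow> E x y \<or> {x, y} \<in> F"

definition triangulation :: "'a set \<Rightarrow> ('a \<Rightarrow> 'a \<Rightarrow> bool) \<Rightarrow> 'a set set \<Rightarrow> bool" where
  "triangulation V E F \<longleftrightarrow> F \<subseteq> non_edges V E \<and> chordal V (add_edges E F)"

definition minimal_triangulation :: "'a set \<Rightarrow> ('a \<Rightarrow> 'a \<Rightarrow> bool) \<Rightarrow> 'a set set \<Rightarrow> bool" where
  "minimal_triangulation V E F \<longleftrightarrow> triangulation V E F \<and>
     (\<forall>F'. F' \<subset> F \<longrightarrow> \<not> triangulation V E F')"

definition clique :: "'a set \<Rightarrow> ('a \<Rightarrow> 'a \<Rightarrow> bool) \<Rightarrow> 'a set \<Rightarrow> bool" where
  "clique V E K \<longleftrightarrow> K \<subseteq> V \<and> (\<forall>x\<in>K. \<forall>y\<in>K. x \<noteq> y \<longrightarrow> E x y)"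

definition maximal_clique :: "'a set \<Rightarrow> ('a \<Rightarrow> 'a \<Rightarrow> bool) \<Rightarrow> 'a set \<Rightarrow> bool" where
  "maximal_clique V E K \<longleftrightarrow> clique V E K \<and> (\<forall>K'. clique V E K' \<and> K \<subseteq> K' \<longrightarrow> K' = K)"

definition potential_maximal_clique :: "'a set \<Rightarrow> ('a \<Rightarrow> 'a \<Rightarrow> bool) \<Rightarrow> 'a set \<Rightarrow> bool" where
  "potential_maximal_clique V E \<Omega> \<longleftrightarrow>
     (\<exists>F. minimal_triangulation V E F \<and> maximal_clique V (add_edges E F) \<Omega>)"

definition efficient_dominating_set :: "'a set \<Rightarrow> ('a \<Rightarrow> 'a \<Rightarrow> bool) \<Rightarrow> 'a set \<Rightarrow> bool" where
  "efficient_dominating_set V E X \<longleftrightarrow> X \<subseteq> V \<and> (\<forall>v\<in>V. card (cnbhd E v \<inter> X) = 1)"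

end

theory Submission
  imports Defs
begin

text \<open>
  The measure that is uniform on \<open>\<Omega> \<inter> X\<close> is a probability measure on \<open>\<Omega>\<close>, and since
  \<open>X\<close> is an efficient dominating set, every neighbourhood \<open>N(v)\<close> contains at most one
  vertex of \<open>X\<close>. So the vertex promised by the hypothesis gets mass
  \<open>\<beta> \<le> 1 / |\<Omega> \<inter> X|\<close>.

  The hypothesis only applies to connected graphs on \<open>nat\<close> with at least two vertices.
  A minimal triangulation never adds an edge between two components, so \<open>\<Omega>\<close> lies in a
  single component \<open>C\<close> and is a potential maximal clique of \<open>G[C]\<close>; relabelling \<open>C\<close>
  by \<open>{..<|C|}\<close> preserves all notions involved. If \<open>|C| < 2\<close>, then \<open>|\<Omega> \<inter> X| \<le> 1\<close>,
  and \<open>\<beta> \<le> 1\<close> follows from the hypothesis applied to \<open>K\<^sub>2\<close>.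
\<close>

section \<open>Induced embeddings and isomorphisms\<close>

definition induced_embedding ::
    "('b \<Rightarrow> 'a) \<Rightarrow> 'b set \<Rightarrow> ('b \<Rightarrow> 'b \<Rightarrow> bool) \<Rightarrow> 'a set \<Rightarrow> ('a \<Rightarrow> 'a \<Rightarrow> bool) \<Rightarrow> bool" where
  "induced_embedding g W E' V E \<longleftrightarrow>
     inj_on g W \<and> g ` W \<subseteq> V \<and> (\<forall>x\<in>W. \<forall>y\<in>W. E (g x) (g y) \<longleftrightarrow> E' x y)"

lemma induced_embedding_id:
  assumes "W \<subseteq> V" "\<forall>x\<in>W. \<forall>y\<in>W. E x y \<longleftrightarrow> E' x y"
  shows "induced_embedding id W E' V E"
  using assms unfolding induced_embedding_def by auto

lemma induced_embedding_comp_pattern: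
  assumes "induced_embedding g W E' V E"
    and "inj_on p {..<k}" "p ` {..<k} \<subseteq> W" "\<forall>i<k. \<forall>j<k. E' (p i) (p j) \<longleftrightarrow> R i j"
  shows "inj_on (g \<circ> p) {..<k} \<and> (g \<circ> p) ` {..<k} \<subseteq> V
    \<and> (\<forall>i<k. \<forall>j<k. E ((g \<circ> p) i) ((g \<circ> p) j) \<longleftrightarrow> R i j)"
  using assms unfolding induced_embedding_def
  by (auto simp: image_subset_iff intro: comp_inj_on inj_on_subset)

lemma has_induced_path_embedding:
  assumes "induced_embedding g W E' V E" "has_induced_path W E' k"
  shows "has_induced_path V E k"
proof -
  obtain p where "inj_on p {..<k}" "p ` {..<k} \<subseteq> W"
    "\<forall>i<k. \<forall>j<k. E' (p i) (p j) \<longleftrightarrow> (i = j + 1 \<or> j = i + 1)"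
    using assms(2) unfolding has_induced_path_def by blast
  from induced_embedding_comp_pattern[OF assms(1) this] show ?thesis
    unfolding has_induced_path_def by blast
qed

lemma has_induced_cycle_embedding:
  assumes "induced_embedding g W E' V E" "has_induced_cycle W E' k"
  shows "has_induced_cycle V E k"
proof -
  obtain p where "inj_on p {..<k}" "p ` {..<k} \<subseteq> W"
    "\<forall>i<k. \<forall>j<k. E' (p i) (p j) \<longleftrightarrow> (i = Suc j mod k \<or> j = Suc i mod k)"
    using assms(2) unfolding has_induced_cycle_def by blast
  from induced_embedding_comp_pattern[OF assms(1) this] show ?thesis
    unfolding has_induced_cycle_def by blast
qed

lemma P7_free_embedding:
  "induced_embedding g W E' V E \<Longrightarrow> P7_free V E \<Longrightarrow> P7_free W E'"
  unfolding P7_free_def using has_induced_path_embedding by blast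

lemma chordal_embedding:
  "induced_embedding g W E' V E \<Longrightarrow> chordal V E \<Longrightarrow> chordal W E'"
  unfolding chordal_def using has_induced_cycle_embedding by blast

lemma chordal_subset_cong:
  "W \<subseteq> V \<Longrightarrow> chordal V E \<Longrightarrow> \<forall>x\<in>W. \<forall>y\<in>W. E x y \<longleftrightarrow> E' x y \<Longrightarrow> chordal W E'"
  using chordal_embedding induced_embedding_id by blast

lemma has_induced_path_card_le: "has_induced_path V E k \<Longrightarrow> finite V \<Longrightarrow> k \<le> card V"
  unfolding has_induced_path_def using card_inj_on_le by fastforce

lemma has_induced_cycle_card_le: "has_induced_cycle V E k \<Longrightarrow> finite V \<Longrightarrow> k \<le> card V"
  unfolding has_induced_cycle_def using card_inj_on_le by fastforce

definition graph_iso ::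
    "('a \<Rightarrow> 'b) \<Rightarrow> 'a set \<Rightarrow> ('a \<Rightarrow> 'a \<Rightarrow> bool) \<Rightarrow> 'b set \<Rightarrow> ('b \<Rightarrow> 'b \<Rightarrow> bool) \<Rightarrow> bool" where
  "graph_iso f V E W E' \<longleftrightarrow> induced_embedding f V E W E' \<and> f ` V = W"

lemma graph_iso_bij_betw: "graph_iso f V E W E' \<Longrightarrow> bij_betw f V W"
  unfolding graph_iso_def induced_embedding_def bij_betw_def by blast

lemma graph_iso_adj:
  "graph_iso f V E W E' \<Longrightarrow> x \<in> V \<Longrightarrow> y \<in> V \<Longrightarrow> E' (f x) (f y) \<longleftrightarrow> E x y"
  unfolding graph_iso_def induced_embedding_def by blast

lemma graph_iso_imp_induced_embedding:
  "graph_iso f V E W E' \<Longrightarrow> induced_embedding f V E W E'"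
  unfolding graph_iso_def by blast

lemma graph_iso_inv:
  assumes "graph_iso f V E W E'"
  shows "graph_iso (inv_into V f) W E' V E"
proof -
  have bij: "bij_betw f V W" by (rule graph_iso_bij_betw[OF assms])
  then have "bij_betw (inv_into V f) W V" by (rule bij_betw_inv_into)
  moreover have "\<forall>x\<in>W. \<forall>y\<in>W. E (inv_into V f x) (inv_into V f y) \<longleftrightarrow> E' x y"
    using assms bij unfolding graph_iso_def induced_embedding_def
    by (metis f_inv_into_f inv_into_into)
  ultimately show ?thesis
    unfolding graph_iso_def induced_embedding_def bij_betw_def by blast
qed

lemma chordal_iso: "graph_iso f V E W E' \<Longrightarrow> chordal V E \<Longrightarrow> chordal W E'"
  by (rule chordal_embedding[OF graph_iso_imp_induced_embedding[OF graph_iso_inv]])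

lemma P7_free_iso: "graph_iso f V E W E' \<Longrightarrow> P7_free V E \<Longrightarrow> P7_free W E'"
  by (rule P7_free_embedding[OF graph_iso_imp_induced_embedding[OF graph_iso_inv]])

lemma rtranclp_map_within:
  assumes "E\<^sup>*\<^sup>* x y" "x \<in> V"
    and step: "\<And>u v. u \<in> V \<Longrightarrow> E u v \<Longrightarrow> v \<in> V \<and> E' (f u) (f v)"
  shows "E'\<^sup>*\<^sup>* (f x) (f y)"
proof -
  from assms(1) have "y \<in> V \<and> E'\<^sup>*\<^sup>* (f x) (f y)"
    by (induction rule: rtranclp_induct)
      (use assms(2) step in \<open>auto intro: rtranclp.rtrancl_into_rtrancl\<close>)
  then show ?thesis ..
qed

lemma connected_graph_iso:
  assumes "graph V E" and iso: "graph_iso f V E W E'" and "connected_graph V E"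
  shows "connected_graph W E'"
proof -
  have surj: "f ` V = W" using bij_betw_imp_surj_on[OF graph_iso_bij_betw[OF iso]] .
  have step: "v \<in> V \<and> E' (f u) (f v)" if "u \<in> V" "E u v" for u v
    using that \<open>graph V E\<close> graph_iso_adj[OF iso] unfolding graph_def by blast
  have "E'\<^sup>*\<^sup>* (f x) (f y)" if "x \<in> V" "y \<in> V" for x y
  proof -
    have "E\<^sup>*\<^sup>* x y" using that \<open>connected_graph V E\<close> unfolding connected_graph_def by blast
    from this \<open>x \<in> V\<close> step show ?thesis by (rule rtranclp_map_within)
  qed
  with surj \<open>connected_graph V E\<close> show ?thesis unfolding connected_graph_def by blast
qed

lemma graph_iso_to_nat:
  assumes "graph V E"
  obtains f :: "'a \<Rightarrow> nat" and E' where "graph_iso f V E {..<card V} E'" "graph {..<card V} E'"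
proof -
  have "finite V" using \<open>graph V E\<close> unfolding graph_def by blast
  then obtain f where "bij_betw f V {0..<card V}" using ex_bij_betw_finite_nat by blast
  then have bij: "bij_betw f V {..<card V}" by (simp only: atLeast0LessThan)
  let ?g = "inv_into V f"
  define E' where "E' i j \<longleftrightarrow> i < card V \<and> j < card V \<and> E (?g i) (?g j)" for i j
  have "graph_iso f V E {..<card V} E'"
    using bij unfolding graph_iso_def induced_embedding_def bij_betw_def E'_def by auto
  moreover have "graph {..<card V} E'"
    using \<open>graph V E\<close> unfolding graph_def E'_def by auto
  ultimately show ?thesis by (rule that)
qed

section \<open>Potential maximal cliques under isomorphism\<close>

lemma non_edges_subset_Pow: "non_edges V E \<subseteq> Pow V"
  unfolding non_edges_def by blast

lemma image_non_edges_iso: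
  assumes "graph_iso f V E W E'"
  shows "(`) f ` non_edges V E \<subseteq> non_edges W E'"
proof
  fix e' assume "e' \<in> (`) f ` non_edges V E"
  then obtain u v where "e' = {f u, f v}" "u \<in> V" "v \<in> V" "u \<noteq> v" "\<not> E u v"
    unfolding non_edges_def by auto
  moreover have "f u \<noteq> f v" "f u \<in> W" "f v \<in> W"
    using graph_iso_bij_betw[OF assms] \<open>u \<in> V\<close> \<open>v \<in> V\<close> \<open>u \<noteq> v\<close>
    by (auto simp: bij_betw_def inj_on_eq_iff)
  ultimately show "e' \<in> non_edges W E'"
    using graph_iso_adj[OF assms] unfolding non_edges_def by blast
qed

lemma graph_iso_add_edges:
  assumes iso: "graph_iso f V E W E'" and "F \<subseteq> Pow V"
  shows "graph_iso f V (add_edges E F) W (add_edges E' ((`) f ` F))"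
proof -
  have inj: "inj_on ((`) f) (Pow V)"
    using graph_iso_bij_betw[OF iso] by (simp add: bij_betw_def inj_on_image_Pow)
  have "{f x, f y} \<in> (`) f ` F \<longleftrightarrow> {x, y} \<in> F" if "x \<in> V" "y \<in> V" for x y
    using inj_on_image_mem_iff[OF inj, of "{x, y}" F] that \<open>F \<subseteq> Pow V\<close> by simp
  with iso show ?thesis
    unfolding graph_iso_def induced_embedding_def add_edges_def by auto
qed

lemma triangulation_iso:
  assumes iso: "graph_iso f V E W E'" and "triangulation V E F"
  shows "triangulation W E' ((`) f ` F)"
proof -
  have "F \<subseteq> non_edges V E" "chordal V (add_edges E F)"
    using assms(2) unfolding triangulation_def by auto
  moreover have "F \<subseteq> Pow V" using calculation(1) non_edges_subset_Pow by blast
  ultimately show ?thesis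
    using image_non_edges_iso[OF iso] chordal_iso[OF graph_iso_add_edges[OF iso]]
    unfolding triangulation_def by blast
qed

lemma minimal_triangulation_iso:
  assumes iso: "graph_iso f V E W E'" and mt: "minimal_triangulation V E F"
  shows "minimal_triangulation W E' ((`) f ` F)"
proof -
  let ?g = "inv_into V f"
  have bij: "bij_betw f V W" by (rule graph_iso_bij_betw[OF iso])
  have FV: "F \<subseteq> Pow V"
    using mt non_edges_subset_Pow unfolding minimal_triangulation_def triangulation_def by blast
  have inv_image_F: "(`) ?g ` (`) f ` F = F"
  proof -
    have "inj_on f V" using bij by (rule bij_betw_imp_inj_on)
    then have "?g ` f ` e = e" if "e \<in> F" for e
      using that FV by (simp add: subset_iff)
    then show ?thesis by (simp add: image_image)
  qed
  have inj: "inj_on ((`) ?g) (Pow W)"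
    using bij_betw_inv_into[OF bij] by (simp add: bij_betw_def inj_on_image_Pow)
  have FW: "(`) f ` F \<subseteq> Pow W"
    using FV bij by (auto simp: bij_betw_def)
  have "\<not> triangulation W E' F''" if "F'' \<subset> (`) f ` F" for F''
  proof
    assume "triangulation W E' F''"
    then have tri: "triangulation V E ((`) ?g ` F'')"
      by (rule triangulation_iso[OF graph_iso_inv[OF iso]])
    have F''W: "F'' \<subseteq> Pow W" using that FW by blast
    have "(`) ?g ` F'' \<subseteq> (`) ?g ` (`) f ` F"
      using that by (intro image_mono) blast
    moreover have "(`) ?g ` F'' \<noteq> (`) ?g ` (`) f ` F"
      using that by (simp add: inj_on_image_eq_iff[OF inj F''W FW])
    ultimately have "(`) ?g ` F'' \<subset> (`) ?g ` (`) f ` F" by (rule psubsetI)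
    then have "(`) ?g ` F'' \<subset> F" by (simp only: inv_image_F)
    with tri mt show False
      unfolding minimal_triangulation_def by blast
  qed
  with triangulation_iso[OF iso] mt show ?thesis
    unfolding minimal_triangulation_def by blast
qed

lemma clique_iso:
  assumes iso: "graph_iso f V H W H'" and "clique V H K"
  shows "clique W H' (f ` K)"
  unfolding clique_def
proof (intro conjI ballI impI)
  have "K \<subseteq> V" using \<open>clique V H K\<close> unfolding clique_def by blast
  then show "f ` K \<subseteq> W"
    using bij_betw_imp_surj_on[OF graph_iso_bij_betw[OF iso]] by blast
  fix a b assume "a \<in> f ` K" "b \<in> f ` K" "a \<noteq> b"
  then obtain x y where "x \<in> K" "y \<in> K" "a = f x" "b = f y" "x \<noteq> y" by blast
  with \<open>K \<subseteq> V\<close> \<open>clique V H K\<close> show "H' a b"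
    using graph_iso_adj[OF iso] unfolding clique_def by blast
qed

lemma maximal_clique_iso:
  assumes iso: "graph_iso f V H W H'" and mc: "maximal_clique V H K"
  shows "maximal_clique W H' (f ` K)"
proof -
  let ?g = "inv_into V f"
  have bij: "bij_betw f V W" by (rule graph_iso_bij_betw[OF iso])
  have "K \<subseteq> V" using mc unfolding maximal_clique_def clique_def by blast
  have "K' = f ` K" if "clique W H' K'" "f ` K \<subseteq> K'" for K'
  proof -
    have "clique V H (?g ` K')" by (rule clique_iso[OF graph_iso_inv[OF iso] that(1)])
    moreover have "K \<subseteq> ?g ` K'"
      using image_mono[OF that(2), of ?g] \<open>K \<subseteq> V\<close> bij_betw_imp_inj_on[OF bij] by simp
    ultimately have "?g ` K' = K" using mc unfolding maximal_clique_def by blast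
    moreover have "K' \<subseteq> W" using that(1) unfolding clique_def by blast
    ultimately show "K' = f ` K"
      using image_inv_into_cancel[OF bij_betw_imp_surj_on[OF bij]] by metis
  qed
  moreover have "clique W H' (f ` K)"
    using clique_iso[OF iso] mc unfolding maximal_clique_def by blast
  ultimately show ?thesis unfolding maximal_clique_def by blast
qed

lemma potential_maximal_clique_subset:
  "potential_maximal_clique V E \<Omega> \<Longrightarrow> \<Omega> \<subseteq> V"
  unfolding potential_maximal_clique_def maximal_clique_def clique_def by blast

lemma potential_maximal_clique_iso:
  assumes iso: "graph_iso f V E W E'" and "potential_maximal_clique V E \<Omega>"
  shows "potential_maximal_clique W E' (f ` \<Omega>)"
proof -
  obtain F where mt: "minimal_triangulation V E F" and mc: "maximal_clique V (add_edges E F) \<Omega>"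
    using assms(2) unfolding potential_maximal_clique_def by blast
  have "F \<subseteq> Pow V"
    using mt non_edges_subset_Pow unfolding minimal_triangulation_def triangulation_def by blast
  with mt mc show ?thesis
    unfolding potential_maximal_clique_def
    using minimal_triangulation_iso[OF iso] maximal_clique_iso[OF graph_iso_add_edges[OF iso]]
    by blast
qed

section \<open>Restriction to a union of components\<close>

lemma has_induced_cycle_closed_side:
  assumes "has_induced_cycle V H k" and closed: "\<forall>x y. H x y \<longrightarrow> (x \<in> C \<longleftrightarrow> y \<in> C)"
  shows "has_induced_cycle (V \<inter> C) H k \<or> has_induced_cycle (V - C) H k"
proof -
  obtain p where p: "inj_on p {..<k}" "p ` {..<k} \<subseteq> V"
    "\<forall>i<k. \<forall>j<k. H (p i) (p j) \<longleftrightarrow> (i = Suc j mod k \<or> j = Suc i mod k)"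
    using assms(1) unfolding has_induced_cycle_def by blast
  have same_side: "p i \<in> C \<longleftrightarrow> p 0 \<in> C" if "i < k" for i
    using that
  proof (induction i)
    case (Suc i)
    then have "H (p i) (p (Suc i))" using p(3) by auto
    with Suc closed show ?case by auto
  qed simp
  show ?thesis
  proof (cases "p 0 \<in> C")
    case True
    with same_side p(2) have "p ` {..<k} \<subseteq> V \<inter> C" by auto
    with p show ?thesis unfolding has_induced_cycle_def by blast
  next
    case False
    with same_side p(2) have "p ` {..<k} \<subseteq> V - C" by auto
    with p show ?thesis unfolding has_induced_cycle_def by blast
  qed
qed

lemma chordal_closed_split:
  assumes "\<forall>x y. H x y \<longrightarrow> (x \<in> C \<longleftrightarrow> y \<in> C)" "chordal (V \<inter> C) H" "chordal (V - C) H"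
  shows "chordal V H"
  using assms has_induced_cycle_closed_side unfolding chordal_def by blast

lemma chordal_add_edges_closed_split:
  assumes closed: "\<forall>x y. E x y \<longrightarrow> (x \<in> C \<longleftrightarrow> y \<in> C)"
    and inside: "\<forall>e\<in>F\<^sub>1. e \<subseteq> C" and outside: "\<forall>e\<in>F\<^sub>2. e \<inter> C = {}"
    and "chordal (V \<inter> C) (add_edges E F\<^sub>1)" "chordal (V - C) (add_edges E F\<^sub>2)"
  shows "chordal V (add_edges E (F\<^sub>1 \<union> F\<^sub>2))"
proof (rule chordal_closed_split)
  show "\<forall>x y. add_edges E (F\<^sub>1 \<union> F\<^sub>2) x y \<longrightarrow> (x \<in> C \<longleftrightarrow> y \<in> C)"
  proof (intro allI impI)
    fix x y assume "add_edges E (F\<^sub>1 \<union> F\<^sub>2) x y"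
    then consider "E x y" | "{x, y} \<in> F\<^sub>1" | "{x, y} \<in> F\<^sub>2" unfolding add_edges_def by blast
    then show "x \<in> C \<longleftrightarrow> y \<in> C"
    proof cases
      case 2 with inside show ?thesis by auto
    next
      case 3 with outside show ?thesis by auto
    qed (use closed in blast)
  qed
  have "{x, y} \<notin> F\<^sub>2" if "x \<in> C" for x y
  proof
    assume "{x, y} \<in> F\<^sub>2"
    with outside have "{x, y} \<inter> C = {}" by (rule bspec)
    with that show False by auto
  qed
  then show "chordal (V \<inter> C) (add_edges E (F\<^sub>1 \<union> F\<^sub>2))"
    by (intro chordal_subset_cong[OF subset_refl \<open>chordal (V \<inter> C) (add_edges E F\<^sub>1)\<close>])
      (auto simp: add_edges_def)
  have "{x, y} \<notin> F\<^sub>1" if "x \<notin> C" for x y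
  proof
    assume "{x, y} \<in> F\<^sub>1"
    with inside have "{x, y} \<subseteq> C" by (rule bspec)
    with that show False by auto
  qed
  then show "chordal (V - C) (add_edges E (F\<^sub>1 \<union> F\<^sub>2))"
    by (intro chordal_subset_cong[OF subset_refl \<open>chordal (V - C) (add_edges E F\<^sub>2)\<close>])
      (auto simp: add_edges_def)
qed

lemma minimal_triangulation_fill_edge_closed:
  assumes mt: "minimal_triangulation V E F"
    and closed: "\<forall>x y. E x y \<longrightarrow> (x \<in> C \<longleftrightarrow> y \<in> C)" and "e \<in> F"
  shows "e \<subseteq> C \<or> e \<inter> C = {}"
proof -
  \<comment> \<open>Dropping the fill edges that cross \<open>C\<close> leaves a chordal graph, so by minimality there are none.\<close>
  define F' where "F' = {e \<in> F. e \<subseteq> C} \<union> {e \<in> F. e \<inter> C = {}}"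
  have tri: "F \<subseteq> non_edges V E" "chordal V (add_edges E F)"
    using mt unfolding minimal_triangulation_def triangulation_def by auto
  have "chordal V (add_edges E F')"
    unfolding F'_def
    by (rule chordal_add_edges_closed_split[OF closed])
      (auto intro!: chordal_subset_cong[OF _ tri(2)] simp: add_edges_def)
  moreover have "F' \<subseteq> F" unfolding F'_def by blast
  ultimately have "F' = F"
    using mt tri(1) unfolding minimal_triangulation_def triangulation_def by blast
  with \<open>e \<in> F\<close> show ?thesis unfolding F'_def by blast
qed

definition restrict_edges :: "'a set \<Rightarrow> ('a \<Rightarrow> 'a \<Rightarrow> bool) \<Rightarrow> 'a \<Rightarrow> 'a \<Rightarrow> bool" where
  "restrict_edges C E x y \<longleftrightarrow> x \<in> C \<and> y \<in> C \<and> E x y"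

lemma minimal_triangulation_restrict_closed:
  assumes mt: "minimal_triangulation V E F" and "C \<subseteq> V"
    and closed: "\<forall>x y. E x y \<longrightarrow> (x \<in> C \<longleftrightarrow> y \<in> C)"
  shows "minimal_triangulation C (restrict_edges C E) {e \<in> F. e \<subseteq> C}"
proof -
  let ?E\<^sub>C = "restrict_edges C E" and ?F\<^sub>C = "{e \<in> F. e \<subseteq> C}"
  have tri: "F \<subseteq> non_edges V E" "chordal V (add_edges E F)"
    using mt unfolding minimal_triangulation_def triangulation_def by auto
  have "?F\<^sub>C \<subseteq> non_edges C ?E\<^sub>C"
  proof
    fix e assume "e \<in> ?F\<^sub>C"
    then obtain u v where "e = {u, v}" "u \<noteq> v" "\<not> E u v" "{u, v} \<subseteq> C"
      using tri(1) unfolding non_edges_def by blast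
    then show "e \<in> non_edges C ?E\<^sub>C" unfolding non_edges_def restrict_edges_def by blast
  qed
  moreover have "chordal C (add_edges ?E\<^sub>C ?F\<^sub>C)"
    by (rule chordal_subset_cong[OF \<open>C \<subseteq> V\<close> tri(2)])
      (auto simp: add_edges_def restrict_edges_def)
  moreover have "\<not> triangulation C ?E\<^sub>C F''" if "F'' \<subset> ?F\<^sub>C" for F''
  proof
    assume "triangulation C ?E\<^sub>C F''"
    then have "chordal C (add_edges ?E\<^sub>C F'')" unfolding triangulation_def by blast
    \<comment> \<open>Together with the fill edges outside \<open>C\<close>, \<open>F''\<close> would triangulate \<open>G\<close>.\<close>
    then have "chordal (V \<inter> C) (add_edges E F'')"
      by (rule chordal_subset_cong[OF Int_lower2]) (auto simp: add_edges_def restrict_edges_def)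
    moreover have "chordal (V - C) (add_edges E {e \<in> F. e \<inter> C = {}})"
      by (rule chordal_subset_cong[OF Diff_subset tri(2)]) (auto simp: add_edges_def)
    ultimately have "chordal V (add_edges E (F'' \<union> {e \<in> F. e \<inter> C = {}}))"
      using \<open>F'' \<subset> ?F\<^sub>C\<close> by (intro chordal_add_edges_closed_split[OF closed]) auto
    moreover obtain e where "e \<in> F" "e \<subseteq> C" "e \<notin> F''" using \<open>F'' \<subset> ?F\<^sub>C\<close> by blast
    then have "e \<noteq> {}" using tri(1) unfolding non_edges_def by blast
    with \<open>F'' \<subset> ?F\<^sub>C\<close> \<open>e \<in> F\<close> \<open>e \<subseteq> C\<close> \<open>e \<notin> F''\<close>
    have "F'' \<union> {e \<in> F. e \<inter> C = {}} \<subset> F" by blast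
    ultimately show False
      using mt tri(1) unfolding minimal_triangulation_def triangulation_def by blast
  qed
  ultimately show ?thesis unfolding minimal_triangulation_def triangulation_def by blast
qed

lemma maximal_clique_subset_cong:
  assumes "maximal_clique V H \<Omega>" "\<Omega> \<subseteq> C" "C \<subseteq> V"
    and agree: "\<forall>x\<in>C. \<forall>y\<in>C. H' x y \<longleftrightarrow> H x y"
  shows "maximal_clique C H' \<Omega>"
proof -
  have clique_iff: "clique C H' K \<longleftrightarrow> clique V H K" if "K \<subseteq> C" for K
  proof -
    have "\<forall>x\<in>K. \<forall>y\<in>K. H' x y \<longleftrightarrow> H x y" using that agree by blast
    with that \<open>C \<subseteq> V\<close> show ?thesis unfolding clique_def by auto
  qed
  have "clique C H' \<Omega>"
    using clique_iff assms(1,2) unfolding maximal_clique_def by blast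
  moreover have "K = \<Omega>" if "clique C H' K" "\<Omega> \<subseteq> K" for K
  proof -
    have "K \<subseteq> C" using that(1) unfolding clique_def by blast
    with that clique_iff assms(1) show ?thesis unfolding maximal_clique_def by blast
  qed
  ultimately show ?thesis unfolding maximal_clique_def by blast
qed

lemma potential_maximal_clique_restrict_closed:
  assumes "potential_maximal_clique V E \<Omega>" "C \<subseteq> V"
    and closed: "\<forall>x y. E x y \<longrightarrow> (x \<in> C \<longleftrightarrow> y \<in> C)" and "\<Omega> \<inter> C \<noteq> {}"
  shows "\<Omega> \<subseteq> C" "potential_maximal_clique C (restrict_edges C E) \<Omega>"
proof -
  obtain F where mt: "minimal_triangulation V E F" and mc: "maximal_clique V (add_edges E F) \<Omega>"
    using assms(1) unfolding potential_maximal_clique_def by blast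
  obtain x where x: "x \<in> \<Omega>" "x \<in> C" using \<open>\<Omega> \<inter> C \<noteq> {}\<close> by blast
  show "\<Omega> \<subseteq> C"
  proof
    fix y assume "y \<in> \<Omega>"
    show "y \<in> C"
    proof (cases "y = x")
      case False
      then have "add_edges E F x y"
        using mc x(1) \<open>y \<in> \<Omega>\<close> unfolding maximal_clique_def clique_def by simp
      then consider "E x y" | "{x, y} \<in> F" unfolding add_edges_def by blast
      then show ?thesis
      proof cases
        case 2
        then have "{x, y} \<subseteq> C \<or> {x, y} \<inter> C = {}"
          by (rule minimal_triangulation_fill_edge_closed[OF mt closed])
        with x(2) show ?thesis by auto
      qed (use x(2) closed in blast)
    qed (use x in simp)
  qed
  moreover have "\<forall>x\<in>C. \<forall>y\<in>C.
      add_edges (restrict_edges C E) {e \<in> F. e \<subseteq> C} x y \<longleftrightarrow> add_edges E F x y"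
    unfolding add_edges_def restrict_edges_def by auto
  ultimately have "maximal_clique C (add_edges (restrict_edges C E) {e \<in> F. e \<subseteq> C}) \<Omega>"
    using maximal_clique_subset_cong[OF mc _ \<open>C \<subseteq> V\<close>] by blast
  with minimal_triangulation_restrict_closed[OF mt \<open>C \<subseteq> V\<close> closed]
  show "potential_maximal_clique C (restrict_edges C E) \<Omega>"
    unfolding potential_maximal_clique_def by blast
qed

lemma connected_component_restrict:
  assumes "graph V E" "x \<in> V"
  defines "C \<equiv> {y. E\<^sup>*\<^sup>* x y}"
  shows "C \<subseteq> V" "\<forall>u v. E u v \<longrightarrow> (u \<in> C \<longleftrightarrow> v \<in> C)"
    and "graph C (restrict_edges C E)" "connected_graph C (restrict_edges C E)"
proof -
  have sym: "E v u" if "E u v" for u v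
    using that \<open>graph V E\<close> unfolding graph_def by blast
  show "C \<subseteq> V"
  proof
    fix y assume "y \<in> C"
    then have "E\<^sup>*\<^sup>* x y" unfolding C_def by blast
    then show "y \<in> V"
      by (induction rule: rtranclp_induct) (use \<open>graph V E\<close> \<open>x \<in> V\<close> in \<open>auto simp: graph_def\<close>)
  qed
  show closed: "\<forall>u v. E u v \<longrightarrow> (u \<in> C \<longleftrightarrow> v \<in> C)"
    unfolding C_def using sym by (blast intro: rtranclp.rtrancl_into_rtrancl)
  show "graph C (restrict_edges C E)"
    using \<open>graph V E\<close> \<open>C \<subseteq> V\<close> finite_subset unfolding graph_def restrict_edges_def by blast
  have "(restrict_edges C E)\<^sup>*\<^sup>* (id x) (id y)" if "y \<in> C" for y
  proof -
    have "E\<^sup>*\<^sup>* x y" "x \<in> C" using that unfolding C_def by auto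
    then show ?thesis
      by (rule rtranclp_map_within) (use closed in \<open>auto simp: restrict_edges_def\<close>)
  qed
  moreover have "symp (restrict_edges C E)\<^sup>*\<^sup>*"
    by (rule symp_rtranclp) (use sym in \<open>auto simp: symp_def restrict_edges_def\<close>)
  ultimately have "(restrict_edges C E)\<^sup>*\<^sup>* y z" if "y \<in> C" "z \<in> C" for y z
    using that by (metis id_apply rtranclp_trans sympD)
  moreover have "x \<in> C" unfolding C_def by simp
  ultimately show "connected_graph C (restrict_edges C E)"
    unfolding connected_graph_def by blast
qed

lemma efficient_dominating_set_restrict_closed:
  assumes "efficient_dominating_set V E X" "C \<subseteq> V"
    and closed: "\<forall>u v. E u v \<longrightarrow> (u \<in> C \<longleftrightarrow> v \<in> C)"
  shows "efficient_dominating_set C (restrict_edges C E) (X \<inter> C)"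
proof -
  have "cnbhd (restrict_edges C E) v \<inter> (X \<inter> C) = cnbhd E v \<inter> X" if "v \<in> C" for v
    using that closed unfolding cnbhd_def nbhd_def restrict_edges_def by auto
  with assms(1,2) show ?thesis unfolding efficient_dominating_set_def by auto
qed

section \<open>Efficient dominating sets in potential maximal cliques\<close>

definition pmc_nbhd_mass_bound :: "real \<Rightarrow> bool" where
  "pmc_nbhd_mass_bound \<beta> \<longleftrightarrow>
    (\<forall>(V' :: nat set) (E' :: nat \<Rightarrow> nat \<Rightarrow> bool) (\<Omega>' :: nat set) (\<mu> :: nat \<Rightarrow> real).
        graph V' E' \<and> connected_graph V' E' \<and> card V' \<ge> 2 \<and> P7_free V' E' \<and>
        potential_maximal_clique V' E' \<Omega>' \<and> (\<forall>x\<in>\<Omega>'. \<mu> x \<ge> 0) \<and> (\<Sum>x\<in>\<Omega>'. \<mu> x) = 1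
        \<longrightarrow> (\<exists>v\<in>V'. (\<Sum>x\<in>nbhd E' v \<inter> \<Omega>'. \<mu> x) \<ge> \<beta>))"

lemma pmc_nbhd_mass_bound_transfer:
  fixes V :: "'a set" and \<mu> :: "'a \<Rightarrow> real"
  assumes "pmc_nbhd_mass_bound \<beta>" "graph V E" "connected_graph V E" "card V \<ge> 2" "P7_free V E"
    and pmc: "potential_maximal_clique V E \<Omega>" and "\<forall>x\<in>\<Omega>. \<mu> x \<ge> 0" "(\<Sum>x\<in>\<Omega>. \<mu> x) = 1"
  shows "\<exists>v\<in>V. (\<Sum>x\<in>nbhd E v \<inter> \<Omega>. \<mu> x) \<ge> \<beta>"
proof -
  obtain f :: "'a \<Rightarrow> nat" and E' where iso: "graph_iso f V E {..<card V} E'"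
    and G': "graph {..<card V} E'"
    using graph_iso_to_nat[OF \<open>graph V E\<close>] by blast
  let ?g = "inv_into V f"
  have bij: "bij_betw f V {..<card V}" by (rule graph_iso_bij_betw[OF iso])
  have \<Omega>V: "\<Omega> \<subseteq> V" by (rule potential_maximal_clique_subset[OF pmc])
  have sum_image: "(\<Sum>x\<in>f ` S. \<mu> (?g x)) = (\<Sum>x\<in>S. \<mu> x)" if "S \<subseteq> V" for S
  proof -
    have inj: "inj_on f S" using bij_betw_imp_inj_on[OF bij] that by (rule inj_on_subset)
    have "(\<Sum>x\<in>f ` S. \<mu> (?g x)) = (\<Sum>x\<in>S. \<mu> (?g (f x)))" by (simp add: sum.reindex[OF inj])
    also have "\<dots> = (\<Sum>x\<in>S. \<mu> x)"
      using that bij_betw_imp_inj_on[OF bij] by (intro sum.cong) auto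
    finally show ?thesis .
  qed
  have "\<exists>w\<in>{..<card V}. (\<Sum>x\<in>nbhd E' w \<inter> f ` \<Omega>. \<mu> (?g x)) \<ge> \<beta>"
    using assms(1) unfolding pmc_nbhd_mass_bound_def
  proof (elim allE impE)
    show "graph {..<card V} E' \<and> connected_graph {..<card V} E' \<and> card {..<card V} \<ge> 2
      \<and> P7_free {..<card V} E' \<and> potential_maximal_clique {..<card V} E' (f ` \<Omega>)
      \<and> (\<forall>x\<in>f ` \<Omega>. \<mu> (?g x) \<ge> 0) \<and> (\<Sum>x\<in>f ` \<Omega>. \<mu> (?g x)) = 1"
      using G' connected_graph_iso[OF \<open>graph V E\<close> iso \<open>connected_graph V E\<close>]
        P7_free_iso[OF iso \<open>P7_free V E\<close>] potential_maximal_clique_iso[OF iso pmc]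
        assms(4,7,8) sum_image[OF \<Omega>V] \<Omega>V bij_betw_imp_inj_on[OF bij]
      by auto
  qed
  then obtain w where w: "w < card V" "(\<Sum>x\<in>nbhd E' w \<inter> f ` \<Omega>. \<mu> (?g x)) \<ge> \<beta>" by auto
  have gw: "?g w \<in> V" "f (?g w) = w"
    using w(1) bij by (auto simp: bij_betw_def inv_into_into f_inv_into_f)
  have nbhd_image: "nbhd E' w \<inter> f ` \<Omega> = f ` (nbhd E (?g w) \<inter> \<Omega>)"
    using graph_iso_adj[OF iso gw(1)] gw(2) \<Omega>V unfolding nbhd_def by auto
  have "nbhd E (?g w) \<inter> \<Omega> \<subseteq> V" using \<Omega>V by blast
  then have "(\<Sum>x\<in>nbhd E' w \<inter> f ` \<Omega>. \<mu> (?g x)) = (\<Sum>x\<in>nbhd E (?g w) \<inter> \<Omega>. \<mu> x)"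
    unfolding nbhd_image by (rule sum_image)
  with w(2) gw(1) show ?thesis by auto
qed

lemma pmc_nbhd_mass_bound_le_one:
  assumes "pmc_nbhd_mass_bound \<beta>"
  shows "\<beta> \<le> 1"
proof -
  let ?E = "\<lambda>x y :: bool. x \<noteq> y" and ?\<mu> = "\<lambda>x :: bool. if x then 1 else 0 :: real"
  have "graph UNIV ?E" unfolding graph_def by simp
  moreover have "connected_graph UNIV ?E"
  proof -
    have "?E\<^sup>*\<^sup>* x y" for x y by (cases "x = y") (auto intro: r_into_rtranclp)
    then show ?thesis unfolding connected_graph_def by blast
  qed
  moreover have "P7_free UNIV ?E"
    unfolding P7_free_def using has_induced_path_card_le[of UNIV ?E 7] by auto
  moreover have "potential_maximal_clique UNIV ?E UNIV"
    unfolding potential_maximal_clique_def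
  proof (intro exI conjI)
    have "chordal UNIV (add_edges ?E {})"
      unfolding chordal_def using has_induced_cycle_card_le[of UNIV] by fastforce
    then show "minimal_triangulation UNIV ?E {}"
      unfolding minimal_triangulation_def triangulation_def by blast
    show "maximal_clique UNIV (add_edges ?E {}) UNIV"
      unfolding maximal_clique_def clique_def add_edges_def by blast
  qed
  ultimately obtain v where "(\<Sum>x\<in>nbhd ?E v \<inter> UNIV. ?\<mu> x) \<ge> \<beta>"
    using pmc_nbhd_mass_bound_transfer[OF assms, of UNIV ?E UNIV ?\<mu>] by (auto simp: UNIV_bool)
  moreover have "(\<Sum>x\<in>nbhd ?E v \<inter> UNIV. ?\<mu> x) \<le> (\<Sum>x\<in>UNIV. ?\<mu> x)"
    by (rule sum_mono2) auto
  ultimately show ?thesis by (simp add: UNIV_bool)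
qed

lemma card_pmc_inter_efficient_dominating_set_connected:
  assumes bound: "pmc_nbhd_mass_bound \<beta>" and "graph V E" "connected_graph V E" "P7_free V E"
    and pmc: "potential_maximal_clique V E \<Omega>" and eds: "efficient_dominating_set V E X"
  shows "\<beta> * card (\<Omega> \<inter> X) \<le> 1"
proof -
  let ?Y = "\<Omega> \<inter> X"
  have "finite V" using \<open>graph V E\<close> unfolding graph_def by blast
  have "\<Omega> \<subseteq> V" by (rule potential_maximal_clique_subset[OF pmc])
  then have "finite \<Omega>" using \<open>finite V\<close> by (rule finite_subset)
  show ?thesis
  proof (cases "card V \<ge> 2 \<and> ?Y \<noteq> {}")
    case False
    then have "card ?Y \<le> 1"
      using card_mono[OF \<open>finite V\<close>, of ?Y] \<open>\<Omega> \<subseteq> V\<close> by fastforce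
    then consider "card ?Y = 0" | "card ?Y = 1" by linarith
    then show ?thesis using pmc_nbhd_mass_bound_le_one[OF bound] by cases simp_all
  next
    case True
    then have "card ?Y > 0" using \<open>finite \<Omega>\<close> by (simp add: card_gt_0_iff)
    define \<mu> where "\<mu> x = (if x \<in> ?Y then 1 / card ?Y else 0)" for x
    have mass: "(\<Sum>x\<in>S. \<mu> x) = card (S \<inter> ?Y) / card ?Y" if "finite S" for S
      unfolding \<mu>_def by (simp add: sum.If_cases[OF that] Int_def)
    have "(\<Sum>x\<in>\<Omega>. \<mu> x) = 1"
      using mass[OF \<open>finite \<Omega>\<close>] \<open>card ?Y > 0\<close> by (simp add: Int_absorb1)
    moreover have "\<forall>x\<in>\<Omega>. \<mu> x \<ge> 0" unfolding \<mu>_def by simp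
    ultimately obtain v where "v \<in> V" and v: "\<beta> \<le> (\<Sum>x\<in>nbhd E v \<inter> \<Omega>. \<mu> x)"
      using pmc_nbhd_mass_bound_transfer[OF bound \<open>graph V E\<close> \<open>connected_graph V E\<close> _
          \<open>P7_free V E\<close> pmc] True by blast
    have "card (cnbhd E v \<inter> X) = 1"
      using eds \<open>v \<in> V\<close> unfolding efficient_dominating_set_def by blast
    moreover have "nbhd E v \<inter> \<Omega> \<inter> ?Y \<subseteq> cnbhd E v \<inter> X" unfolding cnbhd_def by blast
    ultimately have "card (nbhd E v \<inter> \<Omega> \<inter> ?Y) \<le> 1"
      by (metis card_mono card.infinite zero_neq_one)
    have "\<beta> \<le> card (nbhd E v \<inter> \<Omega> \<inter> ?Y) / card ?Y"
      using v mass[of "nbhd E v \<inter> \<Omega>"] \<open>finite \<Omega>\<close> by simp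
    also have "\<dots> \<le> 1 / card ?Y"
      using \<open>card (nbhd E v \<inter> \<Omega> \<inter> ?Y) \<le> 1\<close> by (simp add: divide_right_mono)
    finally have "\<beta> \<le> 1 / card ?Y" .
    with \<open>card ?Y > 0\<close> show ?thesis by (simp add: field_simps)
  qed
qed

lemma card_pmc_inter_efficient_dominating_set:
  assumes bound: "pmc_nbhd_mass_bound \<beta>" and "graph V E" "P7_free V E"
    and pmc: "potential_maximal_clique V E \<Omega>" and eds: "efficient_dominating_set V E X"
  shows "\<beta> * card (\<Omega> \<inter> X) \<le> 1"
proof (cases "\<Omega> \<inter> X = {}")
  case False
  then obtain x where x: "x \<in> \<Omega>" "x \<in> X" by blast
  then have "x \<in> V" using potential_maximal_clique_subset[OF pmc] by blast
  define C where "C = {y. E\<^sup>*\<^sup>* x y}"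
  note component = connected_component_restrict[OF \<open>graph V E\<close> \<open>x \<in> V\<close>, folded C_def]
  have "x \<in> C" unfolding C_def by simp
  with x have "\<Omega> \<subseteq> C" "potential_maximal_clique C (restrict_edges C E) \<Omega>"
    using potential_maximal_clique_restrict_closed[OF pmc component(1,2)] by blast+
  moreover have "P7_free C (restrict_edges C E)"
    by (rule P7_free_embedding[OF induced_embedding_id \<open>P7_free V E\<close>])
      (use component(1) in \<open>auto simp: restrict_edges_def\<close>)
  moreover have "efficient_dominating_set C (restrict_edges C E) (X \<inter> C)"
    by (rule efficient_dominating_set_restrict_closed[OF eds component(1,2)])
  ultimately have "\<beta> * card (\<Omega> \<inter> (X \<inter> C)) \<le> 1"
    using card_pmc_inter_efficient_dominating_set_connected[OF bound component(3,4)] by blast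
  moreover have "\<Omega> \<inter> (X \<inter> C) = \<Omega> \<inter> X" using \<open>\<Omega> \<subseteq> C\<close> by blast
  ultimately show ?thesis by simp
qed simp

theorem lemma3:
  fixes \<beta> :: real and V :: "'a set" and E :: "'a \<Rightarrow> 'a \<Rightarrow> bool"
    and \<Omega> X :: "'a set"
  assumes beta_pos: "\<beta> > 0"
    and beta_prop: "\<forall>(V' :: nat set) (E' :: nat \<Rightarrow> nat \<Rightarrow> bool) (\<Omega>' :: nat set) (\<mu> :: nat \<Rightarrow> real).
        graph V' E' \<and> connected_graph V' E' \<and> card V' \<ge> 2 \<and> P7_free V' E' \<and>
        potential_maximal_clique V' E' \<Omega>' \<and> (\<forall>x\<in>\<Omega>'. \<mu> x \<ge> 0) \<and> (\<Sum>x\<in>\<Omega>'. \<mu> x) = 1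
        \<longrightarrow> (\<exists>v\<in>V'. (\<Sum>x\<in>nbhd E' v \<inter> \<Omega>'. \<mu> x) \<ge> \<beta>)"
    and "graph V E"
    and "P7_free V E"
    and "potential_maximal_clique V E \<Omega>"
    and "efficient_dominating_set V E X"
  shows "real (card (\<Omega> \<inter> X)) \<le> 1 / \<beta>"
proof -
  have "pmc_nbhd_mass_bound \<beta>" using beta_prop unfolding pmc_nbhd_mass_bound_def .
  then have "\<beta> * card (\<Omega> \<inter> X) \<le> 1"
    by (rule card_pmc_inter_efficient_dominating_set[OF _ assms(3-6)])
  with beta_pos show ?thesis by (simp add: field_simps)
qed

end
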